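(* Let $T$ be a finite tree and let $T'=KC(T,x,y)$ be a KC-transform of $T$. Then for every integer $\ell\ge 1$, the number of walks of length $\ell$ in $T'$ is at least the number of walks of length $\ell$ in $T$.
   Context: KC-transformation: let $x,y$ be two vertices of a tree $T$ such that every interior vertex of the unique $x$–$y$ path $P$ in $T$ has degree two in $T$, and let $z$ be the neighbour of $y$ on $P$. Writing $\Gamma(v)$ for the set of neighbours of $v$, the KC-transform $KC(T,x,y)$ is the tree obtained from $T$ by deleting all edges between $y$ and $\Gamma(y)\setminus\{z\}$ and adding the edges between $x$ and $\Gamma(y)\setminus\{z\}$ instead. A walk of length $\ell$ is a sequence of vertices $v_0,v_1,\dots,v_\ell$ with $v_{i-1}v_i$ an edge for each $i$ (not necessarily closed). *)

theory Defs
  imports Main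
begin

definition simple_graph :: "'a set \<Rightarrow> 'a set set \<Rightarrow> bool" where
  "simple_graph V E \<longleftrightarrow> finite V \<and>
     (\<forall>e\<in>E. \<exists>u v. e = {u, v} \<and> u \<noteq> v \<and> u \<in> V \<and> v \<in> V)"

definition neighbours :: "'a set set \<Rightarrow> 'a \<Rightarrow> 'a set" where
  "neighbours E v = {w. {v, w} \<in> E}"

definition degree :: "'a set set \<Rightarrow> 'a \<Rightarrow> nat" where
  "degree E v = card (neighbours E v)"

definition is_walk :: "'a set \<Rightarrow> 'a set set \<Rightarrow> 'a list \<Rightarrow> bool" where
  "is_walk V E ws \<longleftrightarrow> ws \<noteq> [] \<and> set ws \<subseteq> V \<and>
     (\<forall>i. Suc i < length ws \<longrightarrow> {ws ! i, ws ! Suc i} \<in> E)"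

definition is_path :: "'a set \<Rightarrow> 'a set set \<Rightarrow> 'a list \<Rightarrow> bool" where
  "is_path V E ws \<longleftrightarrow> is_walk V E ws \<and> distinct ws"

definition is_cycle :: "'a set \<Rightarrow> 'a set set \<Rightarrow> 'a list \<Rightarrow> bool" where
  "is_cycle V E ws \<longleftrightarrow> length ws \<ge> 3 \<and> is_path V E ws \<and> {last ws, hd ws} \<in> E"

definition connected_graph :: "'a set \<Rightarrow> 'a set set \<Rightarrow> bool" where
  "connected_graph V E \<longleftrightarrow>
     (\<forall>u\<in>V. \<forall>v\<in>V. \<exists>ws. is_walk V E ws \<and> hd ws = u \<and> last ws = v)"

definition tree :: "'a set \<Rightarrow> 'a set set \<Rightarrow> bool" where
  "tree V E \<longleftrightarrow> simple_graph V E \<and> V \<noteq> {} \<and> connected_graph V E \<and>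
     \<not> (\<exists>ws. is_cycle V E ws)"

definition num_walks :: "'a set \<Rightarrow> 'a set set \<Rightarrow> nat \<Rightarrow> nat" where
  "num_walks V E l = card {ws. is_walk V E ws \<and> length ws = Suc l}"

text \<open>KC-transform: z is the neighbour of y on the x-y path; edges from y to
  Gamma(y) - {z} are replaced by edges from x to Gamma(y) - {z}.\<close>
definition kc_transform :: "'a set set \<Rightarrow> 'a \<Rightarrow> 'a \<Rightarrow> 'a \<Rightarrow> 'a set set" where
  "kc_transform E x y z =
     (E - {{y, w} | w. w \<in> neighbours E y - {z}}) \<union> {{x, w} | w. w \<in> neighbours E y - {z}}"

end

theory Submission
  imports Defs
begin

text \<open>Let H consist of y and the component of T - y containing z. The remaining vertices form
  the branches at y, which the KC-transformation re-attaches at x while keeping all other edges.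
  A walk is a sequence of maximal segments inside and outside H, and an H-segment adjacent to a
  branch passes through y at that end. It therefore suffices to map walks in H starting at y
  injectively and length-preservingly to walks in H starting at x, and closed walks at y to
  closed walks at x: moving every H-segment in this way turns the walks of T injectively into
  walks of T'. Inside H, the vertex y is the end of the pendant path x = P_0, ..., P_k = y.
  The maps come from reflecting walks about the middle vertex of this path until they first reach
  it (k even), from reversing the path if x has no neighbour in H besides P_1, and otherwise
  (k odd) from reflecting about the middle of the path extended by such a neighbour of x.\<close>

section \<open>Walks\<close>

lemma is_walk_iff_successively:
  "is_walk S E w \<longleftrightarrow> w \<noteq> [] \<and> set w \<subseteq> S \<and> successively (\<lambda>p q. {p, q} \<in> E) w"
  unfolding is_walk_def successively_conv_nth by blast

lemma is_walk_Cons: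
  "is_walk S E (p # w) \<longleftrightarrow> p \<in> S \<and> (w = [] \<or> {p, hd w} \<in> E \<and> is_walk S E w)"
  by (auto simp: is_walk_iff_successively successively_Cons)

lemma is_walk_append:
  "u \<noteq> [] \<Longrightarrow> w \<noteq> [] \<Longrightarrow>
   is_walk S E (u @ w) \<longleftrightarrow> is_walk S E u \<and> is_walk S E w \<and> {last u, hd w} \<in> E"
  by (auto simp: is_walk_iff_successively successively_append_iff)

lemma is_walk_prefix:
  "is_walk S E (b @ r) \<Longrightarrow> b \<noteq> [] \<Longrightarrow>
   is_walk S E b \<and> (r \<noteq> [] \<longrightarrow> is_walk S E r \<and> {last b, hd r} \<in> E)"
  by (cases "r = []") (simp_all add: is_walk_append)

lemma is_walk_rev [simp]: "is_walk S E (rev w) \<longleftrightarrow> is_walk S E w"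
  by (auto simp: is_walk_iff_successively insert_commute)

lemma is_walk_map:
  assumes "is_walk S E w" "\<And>p. p \<in> set w \<Longrightarrow> f p \<in> S'"
    and "\<And>p q. p \<in> set w \<Longrightarrow> q \<in> set w \<Longrightarrow> {p, q} \<in> E \<Longrightarrow> {f p, f q} \<in> E'"
  shows "is_walk S' E' (map f w)"
  using assms unfolding is_walk_iff_successively successively_map
  by (auto intro: successively_mono)

lemma is_walk_mono:
  "is_walk S E w \<Longrightarrow> set w \<subseteq> S' \<Longrightarrow>
   (\<And>p q. p \<in> set w \<Longrightarrow> q \<in> set w \<Longrightarrow> {p, q} \<in> E \<Longrightarrow> {p, q} \<in> E') \<Longrightarrow> is_walk S' E' w"
  using is_walk_map[of S E w id S' E'] by auto

lemma is_walk_subset: "is_walk S E w \<Longrightarrow> S \<subseteq> S' \<Longrightarrow> is_walk S' E w"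
  by (auto simp: is_walk_iff_successively)

lemma walk_nonempty: "is_walk S E w \<Longrightarrow> w \<noteq> []"
  by (simp add: is_walk_def)

lemma hd_in_walk: "is_walk S E w \<Longrightarrow> hd w \<in> S"
  and last_in_walk: "is_walk S E w \<Longrightarrow> last w \<in> S"
  by (auto simp: is_walk_iff_successively)

lemma takeWhile_dropWhile_append:
  "\<forall>v \<in> set xs. P v \<Longrightarrow> ys = [] \<or> \<not> P (hd ys) \<Longrightarrow>
   takeWhile P (xs @ ys) = xs \<and> dropWhile P (xs @ ys) = ys"
  by (cases ys) auto

lemma length_dropWhile_less: "w \<noteq> [] \<Longrightarrow> P (hd w) \<Longrightarrow> length (dropWhile P w) < length w"
  by (cases w) (auto simp: length_dropWhile_le le_imp_less_Suc)

definition walk_shift ::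
  "'a set \<Rightarrow> 'a set set \<Rightarrow> 'a \<Rightarrow> 'a \<Rightarrow> ('a list \<Rightarrow> 'a list) \<Rightarrow> bool" where
  "walk_shift S E u u' f \<longleftrightarrow> inj_on f {w. is_walk S E w \<and> hd w = u} \<and>
     (\<forall>w. is_walk S E w \<and> hd w = u \<longrightarrow>
        is_walk S E (f w) \<and> hd (f w) = u' \<and> length (f w) = length w)"

definition closed_walk_shift ::
  "'a set \<Rightarrow> 'a set set \<Rightarrow> 'a \<Rightarrow> 'a \<Rightarrow> ('a list \<Rightarrow> 'a list) \<Rightarrow> bool" where
  "closed_walk_shift S E u u' g \<longleftrightarrow> inj_on g {w. is_walk S E w \<and> hd w = u \<and> last w = u} \<and>
     (\<forall>w. is_walk S E w \<and> hd w = u \<and> last w = u \<longrightarrow>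
        is_walk S E (g w) \<and> hd (g w) = u' \<and> last (g w) = u' \<and> length (g w) = length w)"

section \<open>Shifting walks\<close>

text \<open>A walk starting in Y \<union> M stays in Y until its first visit to M, so
  applying \<rho> up to that visit gives again a walk. For closed walks the part after the last visit to M is
  reflected as well, so that both ends move.\<close>

locale walk_reflection =
  fixes S :: "'a set" and E :: "'a set set" and Y M :: "'a set" and \<rho> :: "'a \<Rightarrow> 'a"
  assumes neighbour_of_Y: "p \<in> Y \<Longrightarrow> {p, q} \<in> E \<Longrightarrow> q \<in> S \<Longrightarrow> q \<in> Y \<union> M"
    and edge_map: "p \<in> Y \<union> M \<Longrightarrow> q \<in> Y \<union> M \<Longrightarrow> {p, q} \<in> E \<Longrightarrow> {\<rho> p, \<rho> q} \<in> E"
    and fixes_M: "p \<in> M \<Longrightarrow> \<rho> p = p"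
    and inj_on_Y: "inj_on \<rho> Y"
    and maps_Y: "p \<in> Y \<Longrightarrow> \<rho> p \<in> S - M"
begin

definition reflect_head :: "'a list \<Rightarrow> 'a list" where
  "reflect_head w = map \<rho> (takeWhile (\<lambda>v. v \<notin> M) w) @ dropWhile (\<lambda>v. v \<notin> M) w"

definition reflect_ends :: "'a list \<Rightarrow> 'a list" where
  "reflect_ends w =
     (if set w \<inter> M = {} then map \<rho> w else rev (reflect_head (rev (reflect_head w))))"

lemma takeWhile_subset_Y:
  "is_walk S E w \<Longrightarrow> hd w \<in> Y \<union> M \<Longrightarrow> set (takeWhile (\<lambda>v. v \<notin> M) w) \<subseteq> Y"
proof (induction w)
  case (Cons p w)
  show ?case
  proof (cases "p \<in> M \<or> w = []")
    case True
    with Cons.prems show ?thesis by auto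
  next
    case False
    with Cons.prems have "p \<in> Y" "{p, hd w} \<in> E" "is_walk S E w"
      by (auto simp: is_walk_Cons)
    then have "hd w \<in> Y \<union> M" using neighbour_of_Y hd_in_walk by blast
    with Cons.IH \<open>is_walk S E w\<close> \<open>p \<in> Y\<close> False show ?thesis by auto
  qed
qed simp

lemma is_walk_map_\<rho>: "is_walk S E w \<Longrightarrow> set w \<subseteq> Y \<Longrightarrow> is_walk S E (map \<rho> w)"
  by (rule is_walk_map) (use maps_Y edge_map in blast)+

lemma length_reflect_head [simp]: "length (reflect_head w) = length w"
  unfolding reflect_head_def by (metis length_append length_map takeWhile_dropWhile_id)

lemma hd_reflect_head: "w \<noteq> [] \<Longrightarrow> hd (reflect_head w) = \<rho> (hd w)"
  by (cases w) (auto simp: reflect_head_def fixes_M)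

lemma last_reflect_head: "set w \<inter> M \<noteq> {} \<Longrightarrow> last (reflect_head w) = last w"
proof -
  assume "set w \<inter> M \<noteq> {}"
  then have "dropWhile (\<lambda>v. v \<notin> M) w \<noteq> []" by auto
  then show ?thesis unfolding reflect_head_def
    by (metis last_appendR takeWhile_dropWhile_id)
qed

lemma reflect_head_split:
  assumes "is_walk S E w" "hd w \<in> Y \<union> M"
  shows "takeWhile (\<lambda>v. v \<notin> M) (reflect_head w) = map \<rho> (takeWhile (\<lambda>v. v \<notin> M) w)"
    and "dropWhile (\<lambda>v. v \<notin> M) (reflect_head w) = dropWhile (\<lambda>v. v \<notin> M) w"
proof -
  have "\<forall>v \<in> set (map \<rho> (takeWhile (\<lambda>v. v \<notin> M) w)). v \<notin> M"
    using takeWhile_subset_Y[OF assms] maps_Y by auto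
  moreover have "dropWhile (\<lambda>v. v \<notin> M) w = [] \<or> hd (dropWhile (\<lambda>v. v \<notin> M) w) \<in> M"
    using hd_dropWhile by blast
  ultimately show "takeWhile (\<lambda>v. v \<notin> M) (reflect_head w) = map \<rho> (takeWhile (\<lambda>v. v \<notin> M) w)"
    and "dropWhile (\<lambda>v. v \<notin> M) (reflect_head w) = dropWhile (\<lambda>v. v \<notin> M) w"
    unfolding reflect_head_def by (simp_all add: takeWhile_dropWhile_append)
qed

lemma reflect_head_disjoint_iff:
  assumes "is_walk S E w" "hd w \<in> Y \<union> M"
  shows "set (reflect_head w) \<inter> M = {} \<longleftrightarrow> set w \<inter> M = {}"
  using reflect_head_split[OF assms] takeWhile_dropWhile_id[of "\<lambda>v. v \<notin> M"]
  by (metis Int_emptyI disjoint_iff dropWhile_eq_Nil_conv)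

lemma is_walk_reflect_head:
  assumes "is_walk S E w" "hd w \<in> Y \<union> M"
  shows "is_walk S E (reflect_head w)"
proof -
  define t where "t = takeWhile (\<lambda>v. v \<notin> M) w"
  define d where "d = dropWhile (\<lambda>v. v \<notin> M) w"
  have w: "w = t @ d" and tY: "set t \<subseteq> Y"
    using takeWhile_subset_Y[OF assms] by (simp_all add: t_def d_def)
  have "is_walk S E (map \<rho> t @ d)"
  proof (cases "t = [] \<or> d = []")
    case True
    with assms(1) tY show ?thesis
      unfolding w by (auto intro: is_walk_map_\<rho>)
  next
    case False
    then have "is_walk S E t" "is_walk S E d" "{last t, hd d} \<in> E"
      using assms(1) unfolding w by (simp_all add: is_walk_append)
    moreover have "hd d \<in> M" using False hd_dropWhile[of "\<lambda>v. v \<notin> M" w] by (simp add: d_def)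
    ultimately have "{\<rho> (last t), hd d} \<in> E"
      using edge_map[of "last t" "hd d"] fixes_M tY False last_in_set by auto
    with False \<open>is_walk S E t\<close> \<open>is_walk S E d\<close> tY show ?thesis
      by (simp add: is_walk_append is_walk_map_\<rho> last_map)
  qed
  then show ?thesis by (simp add: reflect_head_def t_def d_def)
qed

lemma inj_on_reflect_head: "inj_on reflect_head {w. is_walk S E w \<and> hd w \<in> Y \<union> M}"
proof (rule inj_onI)
  fix w w' assume "w \<in> {w. is_walk S E w \<and> hd w \<in> Y \<union> M}"
    and "w' \<in> {w. is_walk S E w \<and> hd w \<in> Y \<union> M}" and eq: "reflect_head w = reflect_head w'"
  then have w: "is_walk S E w" "hd w \<in> Y \<union> M" and w': "is_walk S E w'" "hd w' \<in> Y \<union> M"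
    by auto
  have "map \<rho> (takeWhile (\<lambda>v. v \<notin> M) w) = map \<rho> (takeWhile (\<lambda>v. v \<notin> M) w')"
    using reflect_head_split(1)[OF w] reflect_head_split(1)[OF w'] eq by simp
  moreover have "inj_on \<rho> (set (takeWhile (\<lambda>v. v \<notin> M) w) \<union> set (takeWhile (\<lambda>v. v \<notin> M) w'))"
    using takeWhile_subset_Y[OF w] takeWhile_subset_Y[OF w'] by (blast intro: inj_on_subset inj_on_Y)
  ultimately have "takeWhile (\<lambda>v. v \<notin> M) w = takeWhile (\<lambda>v. v \<notin> M) w'"
    by (simp add: inj_on_map_eq_map)
  moreover have "dropWhile (\<lambda>v. v \<notin> M) w = dropWhile (\<lambda>v. v \<notin> M) w'"
    using reflect_head_split(2)[OF w] reflect_head_split(2)[OF w'] eq by simp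
  ultimately show "w = w'" by (metis takeWhile_dropWhile_id)
qed

lemma walk_shift_reflect_head:
  assumes "u \<in> Y \<union> M"
  shows "walk_shift S E u (\<rho> u) reflect_head"
proof -
  have "inj_on reflect_head {w. is_walk S E w \<and> hd w = u}"
    by (rule inj_on_subset[OF inj_on_reflect_head]) (use assms in auto)
  with assms show ?thesis
    unfolding walk_shift_def using is_walk_reflect_head by (auto simp: hd_reflect_head walk_nonempty)
qed

lemma disjoint_walk_subset_Y:
  "is_walk S E w \<Longrightarrow> hd w \<in> Y \<union> M \<Longrightarrow> set w \<inter> M = {} \<Longrightarrow> set w \<subseteq> Y"
  using takeWhile_subset_Y by (metis disjoint_iff takeWhile_eq_all_conv)

lemma reflect_ends_props:
  assumes w: "is_walk S E w" "hd w = u" "last w = u" and u: "u \<in> Y \<union> M"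
  shows "is_walk S E (reflect_ends w) \<and> hd (reflect_ends w) = \<rho> u \<and>
    last (reflect_ends w) = \<rho> u \<and> length (reflect_ends w) = length w \<and>
    (set (reflect_ends w) \<inter> M = {} \<longleftrightarrow> set w \<inter> M = {})"
proof (cases "set w \<inter> M = {}")
  case True
  then have "set w \<subseteq> Y" using disjoint_walk_subset_Y w u by blast
  moreover have "w \<noteq> []" using w(1) by (rule walk_nonempty)
  ultimately show ?thesis
    using True w maps_Y by (auto simp: reflect_ends_def is_walk_map_\<rho> hd_map last_map)
next
  case False
  define r where "r = reflect_head w"
  define r' where "r' = reflect_head (rev r)"
  have r: "is_walk S E r" "hd r = \<rho> u" "last r = u" "set r \<inter> M \<noteq> {}"
    using is_walk_reflect_head[of w] hd_reflect_head[of w] last_reflect_head[of w]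
      reflect_head_disjoint_iff[of w] w u False
    by (auto simp: r_def dest: walk_nonempty)
  then have "is_walk S E (rev r)" "rev r \<noteq> []" "hd (rev r) = u" "set (rev r) \<inter> M \<noteq> {}"
    by (auto simp: hd_rev dest: walk_nonempty)
  then have r': "is_walk S E r'" "hd r' = \<rho> u" "last r' = \<rho> u" "set r' \<inter> M \<noteq> {}"
    using is_walk_reflect_head[of "rev r"] hd_reflect_head[of "rev r"] last_reflect_head[of "rev r"]
      reflect_head_disjoint_iff[of "rev r"] u r(2)
    unfolding r'_def by (auto simp: last_rev)
  have "reflect_ends w = rev r'" using False by (simp add: reflect_ends_def r_def r'_def)
  with r' False show ?thesis
    by (auto simp: r_def r'_def hd_rev last_rev)
qed

lemma inj_on_reflect_ends:
  assumes u: "u \<in> Y \<union> M"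
  shows "inj_on reflect_ends {w. is_walk S E w \<and> hd w = u \<and> last w = u}"
proof (rule inj_onI)
  fix w w' assume "w \<in> {w. is_walk S E w \<and> hd w = u \<and> last w = u}"
    and "w' \<in> {w. is_walk S E w \<and> hd w = u \<and> last w = u}"
    and eq: "reflect_ends w = reflect_ends w'"
  then have w: "is_walk S E w" "hd w = u" "last w = u"
    and w': "is_walk S E w'" "hd w' = u" "last w' = u" by auto
  have same: "set w \<inter> M = {} \<longleftrightarrow> set w' \<inter> M = {}"
    using reflect_ends_props[OF w u] reflect_ends_props[OF w' u] eq by metis
  show "w = w'"
  proof (cases "set w \<inter> M = {}")
    case True
    then have "map \<rho> w = map \<rho> w'" using same eq by (simp add: reflect_ends_def)
    moreover have "set w \<union> set w' \<subseteq> Y"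
      using disjoint_walk_subset_Y w w' u True same by (metis Un_subset_iff)
    ultimately show ?thesis by (metis inj_on_map_eq_map inj_on_subset inj_on_Y)
  next
    case False
    have dom: "rev (reflect_head v) \<in> {w. is_walk S E w \<and> hd w \<in> Y \<union> M}"
      if "is_walk S E v" "hd v = u" "last v = u" "set v \<inter> M \<noteq> {}" for v
      using that u is_walk_reflect_head[of v] last_reflect_head[of v] by (simp add: hd_rev)
    have False': "set w' \<inter> M \<noteq> {}" using False same by blast
    have "reflect_head (rev (reflect_head w)) = reflect_head (rev (reflect_head w'))"
      using eq False False' by (simp add: reflect_ends_def)
    then have "reflect_head w = reflect_head w'"
      using inj_onD[OF inj_on_reflect_head _ dom[OF w False] dom[OF w' False']] by simp
    then show ?thesis
      using inj_onD[OF inj_on_reflect_head] w w' u by auto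
  qed
qed

lemma closed_walk_shift_reflect_ends:
  "u \<in> Y \<union> M \<Longrightarrow> closed_walk_shift S E u (\<rho> u) reflect_ends"
  unfolding closed_walk_shift_def using inj_on_reflect_ends reflect_ends_props by blast

end

lemma pendant_walk_tl:
  assumes "is_walk S E w" "hd w = y" "tl w \<noteq> []"
    and pendant: "\<And>q. q \<in> S \<Longrightarrow> {y, q} \<in> E \<Longrightarrow> q = z"
  shows "w = y # tl w \<and> is_walk S E (tl w) \<and> hd (tl w) = z"
proof -
  obtain t where w: "w = y # t" using assms(2,3) by (cases w) auto
  then have "is_walk S E t" "{y, hd t} \<in> E" using assms(1,3) by (auto simp: is_walk_Cons)
  with w show ?thesis using pendant hd_in_walk by auto
qed

lemma pendant_closed_walk_tl:
  assumes "is_walk S E w" "hd w = y" "last w = y" "tl w \<noteq> []" "y \<noteq> z"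
    and pendant: "\<And>q. q \<in> S \<Longrightarrow> {y, q} \<in> E \<Longrightarrow> q = z"
  shows "w = y # butlast (tl w) @ [y] \<and> is_walk S E (butlast (tl w)) \<and>
    hd (butlast (tl w)) = z \<and> last (butlast (tl w)) = z"
proof -
  define c where "c = butlast (tl w)"
  have t: "w = y # tl w" "is_walk S E (tl w)" "hd (tl w) = z"
    using pendant_walk_tl[OF assms(1,2,4) pendant] by blast+
  then have "last (tl w) = y" using assms(3) by (metis last_ConsR assms(4))
  then have tc: "tl w = c @ [y]" unfolding c_def by (metis append_butlast_last_id assms(4))
  have "c \<noteq> []" using t(3) tc assms(5) by auto
  then have "is_walk S E c" "{last c, y} \<in> E" using t(2) tc by (simp_all add: is_walk_append)
  then have "last c = z" using pendant last_in_walk by (metis insert_commute)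
  moreover have "hd c = z" using t(3) tc \<open>c \<noteq> []\<close> by simp
  moreover have "w = y # c @ [y]" using t(1) tc by metis
  ultimately show ?thesis using \<open>is_walk S E c\<close> unfolding c_def[symmetric] by blast
qed

lemma single_vertex_walk: "is_walk S E w \<Longrightarrow> hd w = y \<Longrightarrow> tl w = [] \<Longrightarrow> w = [y]"
  by (cases w) (auto dest: walk_nonempty)

lemma pendant_walk_shift:
  assumes f: "walk_shift S E z x f" and "x \<in> S"
    and pendant: "\<And>q. q \<in> S \<Longrightarrow> {y, q} \<in> E \<Longrightarrow> q = z"
    and neighbour: "\<And>p. p \<in> S \<Longrightarrow> \<exists>q \<in> S. {p, q} \<in> E"
  shows "\<exists>f'. walk_shift S E y x f'"
proof -
  define nb where "nb p = (SOME q. q \<in> S \<and> {p, q} \<in> E)" for p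
  have nb: "nb p \<in> S \<and> {p, nb p} \<in> E" if "p \<in> S" for p
  proof -
    have "\<exists>q. q \<in> S \<and> {p, q} \<in> E" using neighbour[OF that] by blast
    then show ?thesis unfolding nb_def by (rule someI_ex)
  qed
  define f' where "f' w = (if tl w = [] then [x] else f (tl w) @ [nb (last (f (tl w)))])" for w
  have f'_walk: "is_walk S E (f' w) \<and> hd (f' w) = x \<and> length (f' w) = length w"
    if "is_walk S E w" "hd w = y" for w
  proof (cases "tl w = []")
    case True
    then show ?thesis
      using that \<open>x \<in> S\<close> single_vertex_walk[OF that True] by (simp add: f'_def is_walk_Cons)
  next
    case False
    define v where "v = f (tl w)"
    have v: "is_walk S E v" "hd v = x" "length v = length (tl w)"
      using f pendant_walk_tl[OF that False pendant] unfolding walk_shift_def v_def by blast+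
    then have "is_walk S E (v @ [nb (last v)])"
      using nb[OF last_in_walk[OF v(1)]] walk_nonempty[OF v(1)]
      by (simp add: is_walk_append is_walk_Cons)
    moreover have "length w = Suc (length (tl w))" using that by (auto dest: walk_nonempty)
    ultimately show ?thesis using False v walk_nonempty[OF v(1)] by (simp add: f'_def v_def)
  qed
  have "inj_on f' {w. is_walk S E w \<and> hd w = y}"
  proof (rule inj_onI)
    fix w w' assume "w \<in> {w. is_walk S E w \<and> hd w = y}" "w' \<in> {w. is_walk S E w \<and> hd w = y}"
      and eq: "f' w = f' w'"
    then have w: "is_walk S E w" "hd w = y" and w': "is_walk S E w'" "hd w' = y" by auto
    have "length w = length w'" using f'_walk[OF w] f'_walk[OF w'] eq by metis
    then have same: "tl w = [] \<longleftrightarrow> tl w' = []" by (metis length_0_conv length_tl)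
    show "w = w'"
    proof (cases "tl w = []")
      case True
      then show ?thesis using single_vertex_walk w w' same by metis
    next
      case False
      with same eq have "f (tl w) = f (tl w')" by (simp add: f'_def)
      moreover have "inj_on f {w. is_walk S E w \<and> hd w = z}" using f by (simp add: walk_shift_def)
      ultimately have "tl w = tl w'"
        using pendant_walk_tl[OF w False pendant] pendant_walk_tl[OF w'] pendant False same
        by (auto dest: inj_onD)
      then show ?thesis using w w' by (metis hd_Cons_tl walk_nonempty)
    qed
  qed
  with f'_walk have "walk_shift S E y x f'" unfolding walk_shift_def by blast
  then show ?thesis by blast
qed

lemma pendant_closed_walk_shift:
  assumes g: "closed_walk_shift S E z x g" and "x \<in> S" "y \<noteq> z"
    and pendant: "\<And>q. q \<in> S \<Longrightarrow> {y, q} \<in> E \<Longrightarrow> q = z"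
    and a: "a \<in> S" "{x, a} \<in> E"
  shows "\<exists>g'. closed_walk_shift S E y x g'"
proof -
  define g' where "g' w = (if tl w = [] then [x] else x # a # g (butlast (tl w)))" for w
  note closed_tl = pendant_closed_walk_tl[OF _ _ _ _ \<open>y \<noteq> z\<close> pendant]
  have g'_walk: "is_walk S E (g' w) \<and> hd (g' w) = x \<and> last (g' w) = x \<and> length (g' w) = length w"
    if "is_walk S E w" "hd w = y" "last w = y" for w
  proof (cases "tl w = []")
    case True
    then show ?thesis
      using that \<open>x \<in> S\<close> single_vertex_walk[OF that(1,2) True] by (simp add: g'_def is_walk_Cons)
  next
    case False
    define c where "c = butlast (tl w)"
    note w = closed_tl[OF that False, folded c_def]
    have gc: "is_walk S E (g c)" "hd (g c) = x" "last (g c) = x" "length (g c) = length c"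
      using g w unfolding closed_walk_shift_def by blast+
    have "g c \<noteq> []" using walk_nonempty[OF gc(1)] .
    then have "is_walk S E (x # a # g c)" using gc a \<open>x \<in> S\<close> by (simp add: is_walk_Cons insert_commute)
    moreover have "length w = length c + 2" using arg_cong[OF conjunct1[OF w], of length] by simp
    ultimately show ?thesis using False gc \<open>g c \<noteq> []\<close> by (simp add: g'_def c_def)
  qed
  have "inj_on g' {w. is_walk S E w \<and> hd w = y \<and> last w = y}"
  proof (rule inj_onI)
    fix w w' assume "w \<in> {w. is_walk S E w \<and> hd w = y \<and> last w = y}"
      "w' \<in> {w. is_walk S E w \<and> hd w = y \<and> last w = y}" and eq: "g' w = g' w'"
    then have w: "is_walk S E w" "hd w = y" "last w = y"
      and w': "is_walk S E w'" "hd w' = y" "last w' = y" by auto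
    have "length w = length w'" using g'_walk[OF w] g'_walk[OF w'] eq by metis
    then have same: "tl w = [] \<longleftrightarrow> tl w' = []" by (metis length_0_conv length_tl)
    show "w = w'"
    proof (cases "tl w = []")
      case True
      then show ?thesis using single_vertex_walk w w' same by metis
    next
      case False
      with same eq have "g (butlast (tl w)) = g (butlast (tl w'))" by (simp add: g'_def)
      moreover have "inj_on g {w. is_walk S E w \<and> hd w = z \<and> last w = z}"
        using g by (simp add: closed_walk_shift_def)
      ultimately have "butlast (tl w) = butlast (tl w')"
        using closed_tl[OF w False] closed_tl[OF w'] False same by (auto dest: inj_onD)
      then show ?thesis using closed_tl[OF w False] closed_tl[OF w'] False same by metis
    qed
  qed
  with g'_walk have "closed_walk_shift S E y x g'" unfolding closed_walk_shift_def by blast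
  then show ?thesis by blast
qed

section \<open>Moving a branch\<close>

text \<open>The vertices outside H form a branch attached to H only at u in E and only at u' in E'.
  transplant keeps the segments of a walk outside H and moves each maximal segment inside H by
  move_segment, whose flags tell whether the segment is the first or the last one of the walk:
  a segment preceded by the branch starts at u, one followed by it ends at u.\<close>

locale branch_transplant =
  fixes V H :: "'a set" and E E' :: "'a set set" and u u' :: 'a
    and f g :: "'a list \<Rightarrow> 'a list"
  assumes H_subset: "H \<subseteq> V"
    and edge_inside: "p \<in> H \<Longrightarrow> q \<in> H \<Longrightarrow> {p, q} \<in> E \<Longrightarrow> {p, q} \<in> E'"
    and edge_outside: "p \<notin> H \<Longrightarrow> q \<notin> H \<Longrightarrow> {p, q} \<in> E \<Longrightarrow> {p, q} \<in> E'"
    and edge_across: "p \<in> H \<Longrightarrow> q \<notin> H \<Longrightarrow> {p, q} \<in> E \<Longrightarrow> p = u \<and> {u', q} \<in> E'"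
    and shift_open: "walk_shift H E u u' f"
    and shift_closed: "closed_walk_shift H E u u' g"
begin

definition segment :: "bool \<Rightarrow> bool \<Rightarrow> 'a list \<Rightarrow> bool" where
  "segment initial final h \<longleftrightarrow>
     is_walk H E h \<and> (\<not> initial \<longrightarrow> hd h = u) \<and> (\<not> final \<longrightarrow> last h = u)"

definition move_segment :: "bool \<Rightarrow> bool \<Rightarrow> 'a list \<Rightarrow> 'a list" where
  "move_segment initial final h =
     (if initial then if final then h else rev (f (rev h)) else if final then f h else g h)"

lemma move_segment_props:
  assumes "segment initial final h"
  shows "is_walk H E (move_segment initial final h) \<and>
    length (move_segment initial final h) = length h \<and>
    (\<not> initial \<longrightarrow> hd (move_segment initial final h) = u') \<and>
    (\<not> final \<longrightarrow> last (move_segment initial final h) = u')"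
proof -
  have h: "is_walk H E h" "\<not> initial \<longrightarrow> hd h = u" "\<not> final \<longrightarrow> last h = u"
    using assms by (simp_all add: segment_def)
  have f: "is_walk H E (f w) \<and> hd (f w) = u' \<and> length (f w) = length w"
    if "is_walk H E w" "hd w = u" for w
    using shift_open that by (simp add: walk_shift_def)
  have g: "is_walk H E (g h) \<and> hd (g h) = u' \<and> last (g h) = u' \<and> length (g h) = length h"
    if "hd h = u" "last h = u"
    using shift_closed h(1) that by (simp add: closed_walk_shift_def)
  show ?thesis
    using h f[of h] f[of "rev h"] g walk_nonempty[OF h(1)]
    by (auto simp: move_segment_def hd_rev last_rev)
qed

lemma inj_on_move_segment:
  "inj_on (move_segment initial final) {h. segment initial final h}"
proof -
  have f: "inj_on f {h. is_walk H E h \<and> hd h = u}"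
    and g: "inj_on g {h. is_walk H E h \<and> hd h = u \<and> last h = u}"
    using shift_open shift_closed by (simp_all add: walk_shift_def closed_walk_shift_def)
  have "inj_on (\<lambda>h. rev (f (rev h))) {h. is_walk H E h \<and> last h = u}"
  proof (rule inj_onI)
    fix h h' assume "h \<in> {h. is_walk H E h \<and> last h = u}" "h' \<in> {h. is_walk H E h \<and> last h = u}"
      and "rev (f (rev h)) = rev (f (rev h'))"
    then have "rev h = rev h'" using inj_onD[OF f, of "rev h" "rev h'"] by (auto simp: hd_rev)
    then show "h = h'" by simp
  qed
  consider "initial" "final" | "initial" "\<not> final" | "\<not> initial" "final" | "\<not> initial" "\<not> final"
    by blast
  then show ?thesis
  proof cases
    case 1
    then show ?thesis by (simp add: move_segment_def[abs_def])
  next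
    case 2
    then have "{h. segment initial final h} \<subseteq> {h. is_walk H E h \<and> last h = u}"
      by (auto simp: segment_def)
    from inj_on_subset[OF \<open>inj_on (\<lambda>h. rev (f (rev h))) _\<close> this] 2 show ?thesis
      by (simp add: move_segment_def[abs_def])
  next
    case 3
    then have "{h. segment initial final h} \<subseteq> {h. is_walk H E h \<and> hd h = u}"
      by (auto simp: segment_def)
    from inj_on_subset[OF f this] 3 show ?thesis by (simp add: move_segment_def[abs_def])
  next
    case 4
    then have "{h. segment initial final h} \<subseteq> {h. is_walk H E h \<and> hd h = u \<and> last h = u}"
      by (auto simp: segment_def)
    from inj_on_subset[OF g this] 4 show ?thesis by (simp add: move_segment_def[abs_def])
  qed
qed

function transplant :: "bool \<Rightarrow> 'a list \<Rightarrow> 'a list" where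
  "transplant initial w =
     (if w = [] then []
      else if hd w \<notin> H then
        takeWhile (\<lambda>v. v \<notin> H) w @ transplant False (dropWhile (\<lambda>v. v \<notin> H) w)
      else
        move_segment initial (dropWhile (\<lambda>v. v \<in> H) w = []) (takeWhile (\<lambda>v. v \<in> H) w) @
        transplant False (dropWhile (\<lambda>v. v \<in> H) w))"
  by pat_completeness auto
termination
  by (relation "measure (\<lambda>(_, w). length w)") (simp_all add: length_dropWhile_less)

declare transplant.simps [simp del]

lemma transplant_Nil [simp]: "transplant initial [] = []"
  by (simp add: transplant.simps)

definition admissible :: "bool \<Rightarrow> 'a list \<Rightarrow> bool" where
  "admissible initial w \<longleftrightarrow> w = [] \<or> is_walk V E w \<and> (\<not> initial \<longrightarrow> hd w \<notin> H \<or> hd w = u)"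

lemma is_walk_inside:
  assumes "is_walk H E h"
  shows "is_walk V E' h"
proof (rule is_walk_mono[OF assms])
  show "set h \<subseteq> V" using assms H_subset by (auto simp: is_walk_iff_successively)
  show "{p, q} \<in> E'" if "p \<in> set h" "q \<in> set h" "{p, q} \<in> E" for p q
    using that assms edge_inside by (auto simp: is_walk_iff_successively)
qed

lemma split_outside:
  assumes "admissible initial w" "w \<noteq> []" "hd w \<notin> H"
  defines "b \<equiv> takeWhile (\<lambda>v. v \<notin> H) w" and "r \<equiv> dropWhile (\<lambda>v. v \<notin> H) w"
  shows "transplant initial w = b @ transplant False r"
    and "is_walk V E' b" "\<forall>v \<in> set b. v \<notin> H" "w = b @ r" "admissible False r"
    and "r \<noteq> [] \<Longrightarrow> hd r \<in> H \<and> {last b, u'} \<in> E'"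
proof -
  show "transplant initial w = b @ transplant False r"
    using assms(2,3) by (subst transplant.simps) (simp add: b_def r_def)
  show w: "w = b @ r" by (simp add: b_def r_def)
  show out: "\<forall>v \<in> set b. v \<notin> H" by (auto simp: b_def dest: set_takeWhileD)
  have "b \<noteq> []" using assms(2,3) by (simp add: b_def takeWhile_eq_Nil_iff)
  then have b: "is_walk V E b" and br: "r \<noteq> [] \<Longrightarrow> is_walk V E r \<and> {last b, hd r} \<in> E"
    using is_walk_prefix[of V E b r] assms(1,2) w by (simp_all add: admissible_def)
  show "is_walk V E' b"
  proof (rule is_walk_mono[OF b])
    show "set b \<subseteq> V" using b by (simp add: is_walk_iff_successively)
    show "{p, q} \<in> E'" if "p \<in> set b" "q \<in> set b" "{p, q} \<in> E" for p q
      using that out edge_outside by blast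
  qed
  have hd_r: "r \<noteq> [] \<Longrightarrow> hd r \<in> H" using hd_dropWhile[of "\<lambda>v. v \<notin> H" w] by (simp add: r_def)
  have across: "r \<noteq> [] \<Longrightarrow> hd r = u \<and> {u', last b} \<in> E'"
    using edge_across[of "hd r" "last b"] hd_r br out \<open>b \<noteq> []\<close> by (simp add: insert_commute)
  then show "r \<noteq> [] \<Longrightarrow> hd r \<in> H \<and> {last b, u'} \<in> E'" using hd_r by (simp add: insert_commute)
  show "admissible False r" using br across by (auto simp: admissible_def)
qed

lemma split_inside:
  assumes "admissible initial w" "w \<noteq> []" "hd w \<in> H"
  defines "h \<equiv> takeWhile (\<lambda>v. v \<in> H) w" and "r \<equiv> dropWhile (\<lambda>v. v \<in> H) w"
  shows "transplant initial w = move_segment initial (r = []) h @ transplant False r"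
    and "segment initial (r = []) h" "\<forall>v \<in> set h. v \<in> H" "w = h @ r" "admissible False r"
    and "r \<noteq> [] \<Longrightarrow> hd r \<notin> H \<and> {u', hd r} \<in> E'"
proof -
  show "transplant initial w = move_segment initial (r = []) h @ transplant False r"
    using assms(2,3) by (subst transplant.simps) (simp add: h_def r_def)
  show w: "w = h @ r" by (simp add: h_def r_def)
  show inside: "\<forall>v \<in> set h. v \<in> H" by (auto simp: h_def dest: set_takeWhileD)
  have "h \<noteq> []" "hd h = hd w" using assms(2,3) by (cases w, simp_all add: h_def)+
  then have h: "is_walk V E h" and hr: "r \<noteq> [] \<Longrightarrow> is_walk V E r \<and> {last h, hd r} \<in> E"
    using is_walk_prefix[of V E h r] assms(1,2) w by (simp_all add: admissible_def)
  have hd_r: "r \<noteq> [] \<Longrightarrow> hd r \<notin> H" using hd_dropWhile[of "\<lambda>v. v \<in> H" w] by (simp add: r_def)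
  have across: "r \<noteq> [] \<Longrightarrow> last h = u \<and> {u', hd r} \<in> E'"
    using edge_across[of "last h" "hd r"] hd_r hr inside \<open>h \<noteq> []\<close> by simp
  then show "r \<noteq> [] \<Longrightarrow> hd r \<notin> H \<and> {u', hd r} \<in> E'" using hd_r by simp
  have "is_walk H E h" using h inside by (auto intro: is_walk_mono)
  then show "segment initial (r = []) h"
    using assms(1,2,3) across \<open>hd h = hd w\<close> by (auto simp: segment_def admissible_def)
  show "admissible False r" using hr hd_r by (auto simp: admissible_def)
qed

lemma transplant_props:
  assumes "admissible initial w" "w \<noteq> []"
  shows "is_walk V E' (transplant initial w) \<and> length (transplant initial w) = length w \<and>
    (hd (transplant initial w) \<in> H \<longleftrightarrow> hd w \<in> H) \<and>
    (hd w \<notin> H \<longrightarrow> hd (transplant initial w) = hd w) \<and>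
    (hd w \<in> H \<and> \<not> initial \<longrightarrow> hd (transplant initial w) = u')"
  using assms
proof (induction "length w" arbitrary: initial w rule: less_induct)
  case less
  show ?case
  proof (cases "hd w \<in> H")
    case False
    define b where "b = takeWhile (\<lambda>v. v \<notin> H) w"
    define r where "r = dropWhile (\<lambda>v. v \<notin> H) w"
    note s = split_outside[OF less.prems False, folded b_def r_def]
    have "b \<noteq> []" using less.prems(2) False by (simp add: b_def takeWhile_eq_Nil_iff)
    show ?thesis
    proof (cases "r = []")
      case True
      have T: "transplant initial w = b" and "w = b" using s(1,4) True by simp_all
      show ?thesis unfolding T using \<open>w = b\<close> s(2) \<open>b \<noteq> []\<close> False by simp
    next
      case r: False
      have "length r < length w" using s(4) \<open>b \<noteq> []\<close> by simp
      from less.hyps[OF this s(5) r] s(6)[OF r]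
      have "is_walk V E' (transplant False r)" "length (transplant False r) = length r"
        "hd (transplant False r) = u'" "transplant False r \<noteq> []"
        by (auto dest: walk_nonempty)
      with s \<open>b \<noteq> []\<close> r False show ?thesis unfolding s(1) by (simp add: is_walk_append)
    qed
  next
    case inside: True
    define h where "h = takeWhile (\<lambda>v. v \<in> H) w"
    define r where "r = dropWhile (\<lambda>v. v \<in> H) w"
    note s = split_inside[OF less.prems inside, folded h_def r_def]
    let ?m = "move_segment initial (r = []) h"
    have m: "is_walk V E' ?m" "?m \<noteq> []" "hd ?m \<in> H" "length ?m = length h"
      "\<not> initial \<longrightarrow> hd ?m = u'" "r \<noteq> [] \<longrightarrow> last ?m = u'"
      using move_segment_props[OF s(2)] is_walk_inside walk_nonempty hd_in_walk by blast+
    have "h \<noteq> []" using s(2) by (auto simp: segment_def dest: walk_nonempty)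
    show ?thesis
    proof (cases "r = []")
      case True
      have T: "transplant initial w = ?m" and "w = h" using s(1,4) True by simp_all
      show ?thesis unfolding T using \<open>w = h\<close> m inside by simp
    next
      case r: False
      have "length r < length w" using s(4) \<open>h \<noteq> []\<close> by simp
      from less.hyps[OF this s(5) r] s(6)[OF r]
      have "is_walk V E' (transplant False r)" "length (transplant False r) = length r"
        "hd (transplant False r) = hd r" "transplant False r \<noteq> []"
        by (auto dest: walk_nonempty)
      with s m r inside show ?thesis unfolding s(1) by (cases initial) (simp_all add: is_walk_append)
    qed
  qed
qed

lemma length_transplant: "admissible initial w \<Longrightarrow> length (transplant initial w) = length w"
  using transplant_props by (cases "w = []") auto

lemma hd_transplant_in_H:
  "admissible initial w \<Longrightarrow> w \<noteq> [] \<Longrightarrow> hd (transplant initial w) \<in> H \<longleftrightarrow> hd w \<in> H"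
  using transplant_props by blast

lemma transplant_outside_split:
  assumes "admissible initial w" "w \<noteq> []" "hd w \<notin> H"
  shows "takeWhile (\<lambda>v. v \<notin> H) (transplant initial w) = takeWhile (\<lambda>v. v \<notin> H) w \<and>
    dropWhile (\<lambda>v. v \<notin> H) (transplant initial w) = transplant False (dropWhile (\<lambda>v. v \<notin> H) w)"
proof -
  define b where "b = takeWhile (\<lambda>v. v \<notin> H) w"
  define r where "r = dropWhile (\<lambda>v. v \<notin> H) w"
  note s = split_outside[OF assms, folded b_def r_def]
  have "transplant False r = [] \<or> hd (transplant False r) \<in> H"
    using hd_transplant_in_H[OF s(5)] s(6) by (cases "r = []") auto
  with s(3) have "takeWhile (\<lambda>v. v \<notin> H) (b @ transplant False r) = b \<and>
      dropWhile (\<lambda>v. v \<notin> H) (b @ transplant False r) = transplant False r"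
    by (intro takeWhile_dropWhile_append) auto
  then show ?thesis unfolding b_def[symmetric] r_def[symmetric] s(1) .
qed

lemma transplant_inside_split:
  assumes "admissible initial w" "w \<noteq> []" "hd w \<in> H"
  shows "takeWhile (\<lambda>v. v \<in> H) (transplant initial w) =
      move_segment initial (dropWhile (\<lambda>v. v \<in> H) w = []) (takeWhile (\<lambda>v. v \<in> H) w) \<and>
    dropWhile (\<lambda>v. v \<in> H) (transplant initial w) = transplant False (dropWhile (\<lambda>v. v \<in> H) w)"
proof -
  define h where "h = takeWhile (\<lambda>v. v \<in> H) w"
  define r where "r = dropWhile (\<lambda>v. v \<in> H) w"
  note s = split_inside[OF assms, folded h_def r_def]
  let ?m = "move_segment initial (r = []) h"
  have "\<forall>v \<in> set ?m. v \<in> H"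
    using move_segment_props[OF s(2)] by (auto simp: is_walk_iff_successively)
  moreover have "transplant False r = [] \<or> hd (transplant False r) \<notin> H"
    using hd_transplant_in_H[OF s(5)] s(6) by (cases "r = []") auto
  ultimately have "takeWhile (\<lambda>v. v \<in> H) (?m @ transplant False r) = ?m \<and>
      dropWhile (\<lambda>v. v \<in> H) (?m @ transplant False r) = transplant False r"
    by (intro takeWhile_dropWhile_append) auto
  then show ?thesis unfolding h_def[symmetric] r_def[symmetric] s(1) .
qed

lemma transplant_inj:
  "admissible initial w \<Longrightarrow> admissible initial w' \<Longrightarrow>
   transplant initial w = transplant initial w' \<Longrightarrow> w = w'"
proof (induction "length w" arbitrary: initial w w' rule: less_induct)
  case less
  have "length w = length w'" using length_transplant less.prems by metis
  show ?case
  proof (cases "w = []")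
    case True
    then show ?thesis using \<open>length w = length w'\<close> by simp
  next
    case w: False
    then have w': "w' \<noteq> []" using \<open>length w = length w'\<close> by auto
    have same_side: "hd w \<in> H \<longleftrightarrow> hd w' \<in> H"
      using hd_transplant_in_H[OF less.prems(1) w] hd_transplant_in_H[OF less.prems(2) w']
        less.prems(3) by metis
    show ?thesis
    proof (cases "hd w \<in> H")
      case False
      note T = transplant_outside_split[OF less.prems(1) w False]
        and T' = transplant_outside_split[OF less.prems(2) w' False[unfolded same_side]]
      have "length (dropWhile (\<lambda>v. v \<notin> H) w) < length w"
        using length_dropWhile_less[OF w, of "\<lambda>v. v \<notin> H"] False by simp
      then have "dropWhile (\<lambda>v. v \<notin> H) w = dropWhile (\<lambda>v. v \<notin> H) w'"
        using less.hyps split_outside(5)[OF less.prems(1) w False]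
          split_outside(5)[OF less.prems(2) w' False[unfolded same_side]] T T' less.prems(3)
        by metis
      moreover have "takeWhile (\<lambda>v. v \<notin> H) w = takeWhile (\<lambda>v. v \<notin> H) w'"
        using T T' less.prems(3) by metis
      ultimately show ?thesis by (metis takeWhile_dropWhile_id)
    next
      case True
      define h r h' r' where "h = takeWhile (\<lambda>v. v \<in> H) w" and "r = dropWhile (\<lambda>v. v \<in> H) w"
        and "h' = takeWhile (\<lambda>v. v \<in> H) w'" and "r' = dropWhile (\<lambda>v. v \<in> H) w'"
      note s = split_inside[OF less.prems(1) w True, folded h_def r_def]
        and s' = split_inside[OF less.prems(2) w' True[unfolded same_side], folded h'_def r'_def]
      note T = transplant_inside_split[OF less.prems(1) w True, folded h_def r_def]
        and T' = transplant_inside_split[OF less.prems(2) w' True[unfolded same_side],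
          folded h'_def r'_def]
      have "length r < length w"
        using length_dropWhile_less[OF w, of "\<lambda>v. v \<in> H"] True by (simp add: r_def)
      then have "r = r'" using less.hyps s(5) s'(5) T T' less.prems(3) by metis
      with T T' less.prems(3) have "move_segment initial (r = []) h = move_segment initial (r = []) h'"
        by metis
      then have "h = h'"
        using inj_on_move_segment[of initial "r = []"] s(2) s'(2) \<open>r = r'\<close> by (auto dest: inj_onD)
      with \<open>r = r'\<close> s(4) s'(4) show ?thesis by simp
    qed
  qed
qed

lemma card_walks_le:
  assumes "finite V"
  shows "card {w. is_walk V E w \<and> length w = n} \<le> card {w. is_walk V E' w \<and> length w = n}"
proof (rule card_inj_on_le)
  have "admissible True w" if "is_walk V E w" for w
    using that by (simp add: admissible_def)
  then show "inj_on (transplant True) {w. is_walk V E w \<and> length w = n}"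
    by (auto intro: inj_onI transplant_inj)
  show "transplant True ` {w. is_walk V E w \<and> length w = n} \<subseteq> {w. is_walk V E' w \<and> length w = n}"
    using transplant_props \<open>\<And>w. is_walk V E w \<Longrightarrow> admissible True w\<close> walk_nonempty by fastforce
  show "finite {w. is_walk V E' w \<and> length w = n}"
    by (rule finite_subset[OF _ finite_lists_length_eq[OF assms, of n]])
      (auto simp: is_walk_iff_successively)
qed

end

section \<open>The KC-transformation\<close>

lemma simple_graph_edge:
  "simple_graph V E \<Longrightarrow> {p, q} \<in> E \<Longrightarrow> p \<noteq> q \<and> p \<in> V \<and> q \<in> V"
  unfolding simple_graph_def by (metis doubleton_eq_iff insert_absorb2 singleton_insert_inj_eq)

lemma walk_to_path:
  "is_walk S E w \<Longrightarrow> \<exists>p. is_path S E p \<and> hd p = hd w \<and> last p = last w"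
proof (induction "length w" arbitrary: w rule: less_induct)
  case less
  show ?case
  proof (cases "distinct w")
    case True
    with less.prems show ?thesis unfolding is_path_def by blast
  next
    case False
    then obtain xs ys zs a where w: "w = xs @ [a] @ ys @ [a] @ zs"
      using not_distinct_decomp by blast
    define w' where "w' = xs @ [a] @ zs"
    have "is_walk S E w'"
      using less.prems unfolding w w'_def
      by (auto simp: is_walk_iff_successively successively_append_iff successively_Cons)
    moreover have "length w' < length w" "hd w' = hd w" "last w' = last w"
      unfolding w w'_def by (cases xs; cases zs; simp)+
    ultimately show ?thesis using less.hyps by metis
  qed
qed

lemma tree_no_detour:
  assumes "tree V E" "{y, b} \<in> E" "{y, c} \<in> E" "b \<noteq> c"
    and "is_walk (V - {y}) E w" "hd w = b" "last w = c"
  shows False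
proof -
  obtain p where p: "is_path (V - {y}) E p" "hd p = b" "last p = c"
    using walk_to_path[OF assms(5)] assms(6,7) by metis
  then have "is_walk (V - {y}) E p" "distinct p" by (simp_all add: is_path_def)
  have "y \<in> V" using assms(1,2) simple_graph_edge by (metis tree_def)
  have "tl p \<noteq> []" using p assms(4) \<open>is_walk (V - {y}) E p\<close>
    by (cases p) (auto dest: walk_nonempty)
  then have "length (y # p) \<ge> 3" by (cases p) (auto simp: Suc_le_eq)
  moreover have "is_walk V E (y # p)"
    using \<open>y \<in> V\<close> assms(2) p is_walk_subset[OF \<open>is_walk (V - {y}) E p\<close>]
    by (auto simp: is_walk_Cons dest: walk_nonempty)
  moreover have "distinct (y # p)"
    using \<open>distinct p\<close> \<open>is_walk (V - {y}) E p\<close> by (auto simp: is_walk_iff_successively)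
  moreover have "{last (y # p), hd (y # p)} \<in> E"
    using assms(3) p \<open>is_walk (V - {y}) E p\<close> by (auto simp: insert_commute dest: walk_nonempty)
  ultimately have "is_cycle V E (y # p)" by (simp add: is_cycle_def is_path_def)
  with assms(1) show False by (auto simp: tree_def)
qed

locale kc_setting =
  fixes V :: "'a set" and E :: "'a set set" and x y :: 'a and P :: "'a list"
  assumes tree: "tree V E" and x_ne_y: "x \<noteq> y"
    and path: "is_path V E P" and hd_P: "hd P = x" and last_P: "last P = y"
    and interior_degree: "\<forall>v \<in> set P - {x, y}. degree E v = 2"
begin

definition k :: nat where "k = length P - 1"

definition z :: 'a where "z = P ! (k - 1)"

text \<open>The complement of H is the union of the branches at y that the transformation moves to x.\<close>
definition H :: "'a set" where
  "H = insert y {v. \<exists>w. is_walk (V - {y}) E w \<and> hd w = z \<and> last w = v}"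

lemma edge:
  assumes "{p, q} \<in> E"
  shows "p \<noteq> q \<and> p \<in> V \<and> q \<in> V"
proof -
  have "simple_graph V E" using tree by (simp add: tree_def)
  then show ?thesis using assms by (rule simple_graph_edge)
qed

lemma length_P: "length P = Suc k" and k_pos: "1 \<le> k"
proof -
  have "P \<noteq> []" using path by (simp add: is_path_def is_walk_def)
  moreover have "length P \<noteq> 1" using hd_P last_P x_ne_y by (cases P) auto
  ultimately have "length P \<ge> 2" by (cases P) (auto simp: Suc_le_eq)
  then show "length P = Suc k" "1 \<le> k" unfolding k_def by auto
qed

lemma nth_P_0: "P ! 0 = x" and nth_P_k: "P ! k = y"
proof -
  have "P \<noteq> []" using length_P by auto
  then show "P ! 0 = x" "P ! k = y"
    using hd_P last_P length_P by (simp_all add: hd_conv_nth last_conv_nth)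
qed

lemma P_edge: "i < k \<Longrightarrow> {P ! i, P ! Suc i} \<in> E"
  using path length_P by (simp add: is_path_def is_walk_def)

lemma nth_P_in_V: "i \<le> k \<Longrightarrow> P ! i \<in> V"
  using path length_P by (auto simp: is_path_def is_walk_def)

lemma nth_P_eq_iff: "i \<le> k \<Longrightarrow> j \<le> k \<Longrightarrow> P ! i = P ! j \<longleftrightarrow> i = j"
  using path length_P by (simp add: is_path_def nth_eq_iff_index_eq)

lemma nth_P_ne_y: "i < k \<Longrightarrow> P ! i \<noteq> y"
  using nth_P_eq_iff[of i k] nth_P_k by simp

lemma yz_edge: "{y, z} \<in> E"
  using P_edge[of "k - 1"] k_pos by (simp add: z_def nth_P_k insert_commute)

lemma interior_neighbours:
  assumes "0 < i" "i < k"
  shows "neighbours E (P ! i) = {P ! (i - 1), P ! Suc i}"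
proof -
  have "P ! i \<in> set P - {x, y}"
    using assms length_P nth_P_eq_iff[of i 0] nth_P_eq_iff[of i k] by (auto simp: nth_P_0 nth_P_k)
  then have "card (neighbours E (P ! i)) = 2" using interior_degree by (simp add: degree_def)
  then obtain p q where pq: "neighbours E (P ! i) = {p, q}" "p \<noteq> q" by (metis card_2_iff)
  have "P ! (i - 1) \<in> neighbours E (P ! i)" "P ! Suc i \<in> neighbours E (P ! i)"
    using P_edge[of "i - 1"] P_edge[of i] assms by (simp_all add: neighbours_def insert_commute)
  moreover have "P ! (i - 1) \<noteq> P ! Suc i" using nth_P_eq_iff[of "i - 1" "Suc i"] assms by simp
  ultimately show ?thesis using pq by auto
qed

lemma nth_P_in_H: "i \<le> k \<Longrightarrow> P ! i \<in> H"
proof (cases "i = k")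
  case False
  assume "i \<le> k"
  define w where "w = map (\<lambda>j. P ! (k - 1 - j)) [0..<k - i]"
  have "is_walk (V - {y}) E w" unfolding is_walk_def
  proof (intro conjI allI impI)
    show "w \<noteq> []" using \<open>i \<le> k\<close> False by (simp add: w_def)
    show "set w \<subseteq> V - {y}"
    proof
      fix v assume "v \<in> set w"
      then obtain j where "v = P ! (k - 1 - j)" by (auto simp: w_def)
      moreover have "k - 1 - j < k" using k_pos by arith
      ultimately show "v \<in> V - {y}" using nth_P_in_V nth_P_ne_y[OF \<open>k - 1 - j < k\<close>] by auto
    qed
    fix j assume "Suc j < length w"
    then have "Suc (k - 1 - Suc j) = k - 1 - j" "k - 1 - Suc j < k" by (simp_all add: w_def)
    then show "{w ! j, w ! Suc j} \<in> E"
      using P_edge[of "k - 1 - Suc j"] \<open>Suc j < length w\<close> by (simp add: w_def insert_commute)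
  qed
  moreover have "hd w = z" "last w = P ! i"
    using \<open>i \<le> k\<close> False by (simp_all add: w_def z_def hd_map last_map)
  ultimately show ?thesis unfolding H_def by blast
qed (simp add: H_def nth_P_k)

lemma y_in_H: "y \<in> H" and z_in_H: "z \<in> H"
  using nth_P_in_H[of k] nth_P_in_H[of "k - 1"] by (simp_all add: nth_P_k z_def)

lemma H_subset_V: "H \<subseteq> V"
proof
  fix v assume "v \<in> H"
  then show "v \<in> V" unfolding H_def using edge[OF yz_edge] last_in_walk by blast
qed

lemma cross_edge:
  assumes "{p, q} \<in> E" "q \<in> H" "p \<notin> H"
  shows "q = y \<and> p \<in> neighbours E y - {z}"
proof -
  have p: "p \<in> V - {y}" using assms edge y_in_H by blast
  have "q = y"
  proof (rule ccontr)
    assume "q \<noteq> y"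
    then obtain w where w: "is_walk (V - {y}) E w" "hd w = z" "last w = q"
      using assms(2) by (auto simp: H_def)
    then have "is_walk (V - {y}) E (w @ [p])" "hd (w @ [p]) = z"
      using p assms(1) by (auto simp: is_walk_append is_walk_Cons walk_nonempty insert_commute)
    then have "p \<in> H" unfolding H_def by fastforce
    with assms(3) show False ..
  qed
  with assms z_in_H show ?thesis by (auto simp: neighbours_def insert_commute)
qed

text \<open>The only place where acyclicity is used.\<close>
lemma branch_disjoint_H: "b \<in> neighbours E y \<Longrightarrow> b \<noteq> z \<Longrightarrow> b \<notin> H"
proof
  assume b: "b \<in> neighbours E y" "b \<noteq> z" and "b \<in> H"
  then have "b \<noteq> y" using edge by (auto simp: neighbours_def)
  with \<open>b \<in> H\<close> obtain w where "is_walk (V - {y}) E w" "hd w = z" "last w = b"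
    by (auto simp: H_def)
  with b tree_no_detour[OF tree yz_edge, of b w] show False by (auto simp: neighbours_def)
qed

lemma H_neighbour_of_nth:
  assumes "1 \<le> i" "i \<le> k" "{P ! i, q} \<in> E" "q \<in> H"
  shows "q = P ! (i - 1) \<or> (i < k \<and> q = P ! Suc i)"
proof (cases "i < k")
  case True
  then show ?thesis using interior_neighbours[of i] assms by (auto simp: neighbours_def)
next
  case False
  then have "q \<in> neighbours E y" using assms by (simp add: nth_P_k neighbours_def)
  then have "q = z" using branch_disjoint_H assms(4) by blast
  with False assms(2) show ?thesis by (simp add: z_def)
qed

lemma y_neighbour_in_H: "q \<in> H \<Longrightarrow> {y, q} \<in> E \<Longrightarrow> q = z"
  using H_neighbour_of_nth[of k q] k_pos by (simp add: nth_P_k z_def)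

lemma path_edge_consecutive:
  assumes "i \<le> k" "j \<le> k" "{P ! i, P ! j} \<in> E"
  shows "j = Suc i \<or> i = Suc j"
proof -
  have "i \<noteq> j" using assms(3) edge by auto
  have "P ! i \<in> H" "P ! j \<in> H" using nth_P_in_H assms by auto
  show ?thesis
  proof (cases "i = 0")
    case False
    then show ?thesis
      using H_neighbour_of_nth[of i "P ! j"] assms nth_P_eq_iff \<open>P ! j \<in> H\<close> by fastforce
  next
    case True
    then have "1 \<le> j" using \<open>i \<noteq> j\<close> by simp
    then show ?thesis
      using H_neighbour_of_nth[of j "P ! i"] assms nth_P_eq_iff \<open>P ! i \<in> H\<close> True
      by (fastforce simp: insert_commute)
  qed
qed

lemma H_neighbour_exists: "p \<in> H \<Longrightarrow> \<exists>q \<in> H. {p, q} \<in> E"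
proof (cases "p = y")
  case True
  then show ?thesis using yz_edge z_in_H by blast
next
  case False
  assume "p \<in> H"
  with False obtain w where w: "is_walk (V - {y}) E w" "hd w = z" "last w = p"
    by (auto simp: H_def)
  show ?thesis
  proof (cases "butlast w = []")
    case True
    then have "p = z" using w by (metis walk_nonempty append_butlast_last_id append_Nil hd_Cons_tl list.sel(1))
    then show ?thesis using yz_edge y_in_H by (auto simp: insert_commute)
  next
    case False
    have "w = butlast w @ [p]" using w walk_nonempty by fastforce
    then have "is_walk (V - {y}) E (butlast w)" "{last (butlast w), p} \<in> E"
      using is_walk_prefix[of "V - {y}" E "butlast w" "[p]"] w False by auto
    moreover have "hd (butlast w) = z" using w(2) False \<open>w = butlast w @ [p]\<close> by (metis hd_append2)
    ultimately have "last (butlast w) \<in> H" unfolding H_def by blast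
    then show ?thesis using \<open>{last (butlast w), p} \<in> E\<close> by (auto simp: insert_commute)
  qed
qed

definition pos :: "'a \<Rightarrow> nat" where "pos = the_inv_into {..k} (\<lambda>i. P ! i)"

lemma pos_nth: "i \<le> k \<Longrightarrow> pos (P ! i) = i"
  unfolding pos_def by (rule the_inv_into_f_f) (use nth_P_eq_iff in \<open>auto simp: inj_on_def\<close>)

lemma path_walk_reflection:
  assumes IJ: "I \<union> J \<subseteq> {..k}"
    and closed: "\<And>i q. i \<in> I \<Longrightarrow> {P ! i, q} \<in> E \<Longrightarrow> q \<in> H \<Longrightarrow> q \<in> (\<lambda>i. P ! i) ` (I \<union> J)"
    and adj: "\<And>i. i \<in> I \<union> J \<Longrightarrow> Suc i \<in> I \<union> J \<Longrightarrow> {f i, f (Suc i)} \<in> E"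
    and fixed: "\<And>j. j \<in> J \<Longrightarrow> f j = P ! j"
    and inj: "inj_on f I"
    and img: "\<And>i. i \<in> I \<Longrightarrow> f i \<in> H - (\<lambda>i. P ! i) ` J"
  shows "walk_reflection H E ((\<lambda>i. P ! i) ` I) ((\<lambda>i. P ! i) ` J) (\<lambda>p. f (pos p))"
proof
  fix p q assume "p \<in> (\<lambda>i. P ! i) ` I" "{p, q} \<in> E" "q \<in> H"
  then show "q \<in> (\<lambda>i. P ! i) ` I \<union> (\<lambda>i. P ! i) ` J" using closed by blast
next
  fix p q assume "p \<in> (\<lambda>i. P ! i) ` I \<union> (\<lambda>i. P ! i) ` J" "q \<in> (\<lambda>i. P ! i) ` I \<union> (\<lambda>i. P ! i) ` J"
    and pq: "{p, q} \<in> E"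
  then obtain i j where ij: "i \<in> I \<union> J" "j \<in> I \<union> J" "p = P ! i" "q = P ! j" by blast
  then have "i \<le> k" "j \<le> k" using IJ by auto
  with ij pq have "j = Suc i \<or> i = Suc j" using path_edge_consecutive by blast
  then show "{f (pos p), f (pos q)} \<in> E"
    using adj ij pos_nth \<open>i \<le> k\<close> \<open>j \<le> k\<close> by (auto simp: insert_commute)
next
  fix p assume "p \<in> (\<lambda>i. P ! i) ` J"
  then show "f (pos p) = p" using fixed pos_nth IJ by auto
next
  show "inj_on (\<lambda>p. f (pos p)) ((\<lambda>i. P ! i) ` I)"
  proof (rule inj_onI)
    fix p q assume "p \<in> (\<lambda>i. P ! i) ` I" "q \<in> (\<lambda>i. P ! i) ` I" and eq: "f (pos p) = f (pos q)"
    then obtain i j where ij: "i \<in> I" "j \<in> I" "p = P ! i" "q = P ! j" by blast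
    moreover have "i \<le> k" "j \<le> k" using ij IJ by auto
    ultimately have "f i = f j" using eq pos_nth by simp
    with ij inj show "p = q" by (auto dest: inj_onD)
  qed
next
  fix p assume "p \<in> (\<lambda>i. P ! i) ` I"
  then obtain i where "i \<in> I" "p = P ! i" by blast
  moreover from this have "i \<le> k" using IJ by auto
  ultimately show "f (pos p) \<in> H - (\<lambda>i. P ! i) ` J" using img pos_nth by simp
qed

lemma upper_segment_closed:
  assumes "lo < i" "i \<le> k" "{P ! i, q} \<in> E" "q \<in> H"
  shows "q \<in> (\<lambda>i. P ! i) ` ({lo<..k} \<union> {lo})"
proof -
  have "q = P ! (i - 1) \<or> (i < k \<and> q = P ! Suc i)"
    using H_neighbour_of_nth assms by simp
  moreover have "i - 1 \<in> {lo<..k} \<union> {lo}" "i < k \<Longrightarrow> Suc i \<in> {lo<..k} \<union> {lo}"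
    using assms(1,2) by auto
  ultimately show ?thesis by blast
qed

lemma walk_shifts_even:
  assumes "even k"
  shows "\<exists>f g. walk_shift H E y x f \<and> closed_walk_shift H E y x g"
proof -
  define m where "m = k div 2"
  have k: "k = 2 * m" "m < k" using assms k_pos by (auto simp: m_def)
  have "walk_reflection H E ((\<lambda>i. P ! i) ` {m<..k}) ((\<lambda>i. P ! i) ` {m}) (\<lambda>p. P ! (k - pos p))"
  proof (rule path_walk_reflection[where f = "\<lambda>i. P ! (k - i)"])
    show "{m<..k} \<union> {m} \<subseteq> {..k}" using k by auto
    show "q \<in> (\<lambda>i. P ! i) ` ({m<..k} \<union> {m})" if "i \<in> {m<..k}" "{P ! i, q} \<in> E" "q \<in> H" for i q
      using upper_segment_closed[of m i q] that by simp
    show "{P ! (k - i), P ! (k - Suc i)} \<in> E" if "i \<in> {m<..k} \<union> {m}" "Suc i \<in> {m<..k} \<union> {m}" for i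
    proof -
      have "i < k" using that by auto
      then have "Suc (k - Suc i) = k - i" "k - Suc i < k" by auto
      then show ?thesis using P_edge[of "k - Suc i"] by (simp add: insert_commute)
    qed
    show "P ! (k - j) = P ! j" if "j \<in> {m}" for j using that k by simp
    show "inj_on (\<lambda>i. P ! (k - i)) {m<..k}" using nth_P_eq_iff by (auto simp: inj_on_def)
    show "P ! (k - i) \<in> H - (\<lambda>i. P ! i) ` {m}" if "i \<in> {m<..k}" for i
      using that nth_P_in_H[of "k - i"] nth_P_eq_iff[of "k - i" m] k by auto
  qed
  then interpret walk_reflection H E "(\<lambda>i. P ! i) ` {m<..k}" "(\<lambda>i. P ! i) ` {m}"
    "\<lambda>p. P ! (k - pos p)" .
  have "y \<in> (\<lambda>i. P ! i) ` {m<..k} \<union> (\<lambda>i. P ! i) ` {m}" using k nth_P_k by auto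
  moreover have "P ! (k - pos y) = x" using pos_nth[of k] nth_P_k nth_P_0 by simp
  ultimately have "walk_shift H E y x reflect_head" "closed_walk_shift H E y x reflect_ends"
    using walk_shift_reflect_head[of y] closed_walk_shift_reflect_ends[of y] by simp_all
  then show ?thesis by blast
qed

lemma walk_shifts_no_branch:
  assumes "\<And>a. a \<in> H \<Longrightarrow> {x, a} \<in> E \<Longrightarrow> a = P ! 1"
  shows "\<exists>f g. walk_shift H E y x f \<and> closed_walk_shift H E y x g"
proof -
  have "walk_reflection H E ((\<lambda>i. P ! i) ` {..k}) ((\<lambda>i. P ! i) ` {}) (\<lambda>p. P ! (k - pos p))"
  proof (rule path_walk_reflection[where f = "\<lambda>i. P ! (k - i)"])
    show "{..k} \<union> {} \<subseteq> {..k}" by simp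
    show "q \<in> (\<lambda>i. P ! i) ` ({..k} \<union> {})" if "i \<in> {..k}" "{P ! i, q} \<in> E" "q \<in> H" for i q
    proof (cases "i = 0")
      case True
      then have "q = P ! 1" using assms[of q] that nth_P_0 by simp
      then show ?thesis using k_pos by auto
    next
      case False
      then have "q = P ! (i - 1) \<or> (i < k \<and> q = P ! Suc i)"
        using H_neighbour_of_nth[of i q] that by simp
      then show ?thesis using that by auto
    qed
    show "{P ! (k - i), P ! (k - Suc i)} \<in> E" if "i \<in> {..k} \<union> {}" "Suc i \<in> {..k} \<union> {}" for i
    proof -
      have "i < k" using that by auto
      then have "Suc (k - Suc i) = k - i" "k - Suc i < k" by auto
      then show ?thesis using P_edge[of "k - Suc i"] by (simp add: insert_commute)
    qed
    show "P ! (k - j) = P ! j" if "j \<in> {}" for j using that by simp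
    show "inj_on (\<lambda>i. P ! (k - i)) {..k}" using nth_P_eq_iff by (auto simp: inj_on_def)
    show "P ! (k - i) \<in> H - (\<lambda>i. P ! i) ` {}" if "i \<in> {..k}" for i
      using nth_P_in_H[of "k - i"] by simp
  qed
  then interpret walk_reflection H E "(\<lambda>i. P ! i) ` {..k}" "(\<lambda>i. P ! i) ` {}"
    "\<lambda>p. P ! (k - pos p)" .
  have "y \<in> (\<lambda>i. P ! i) ` {..k} \<union> (\<lambda>i. P ! i) ` {}" using nth_P_k by auto
  moreover have "P ! (k - pos y) = x" using pos_nth[of k] nth_P_k nth_P_0 by simp
  ultimately have "walk_shift H E y x reflect_head" "closed_walk_shift H E y x reflect_ends"
    using walk_shift_reflect_head[of y] closed_walk_shift_reflect_ends[of y] by simp_all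
  then show ?thesis by blast
qed

lemma odd_path_reflection:
  assumes "odd k" and a: "a \<in> H" "{x, a} \<in> E" "a \<noteq> P ! 1"
  shows "walk_reflection H E ((\<lambda>i. P ! i) ` {k div 2<..k}) ((\<lambda>i. P ! i) ` {k div 2})
    (\<lambda>p. if pos p < k then P ! (k - 1 - pos p) else a)"
proof -
  define m where "m = k div 2"
  have k: "k = Suc (2 * m)" using assms(1) by (simp add: m_def)
  have a_off_P: "a \<noteq> P ! j" if "j \<le> k" for j
  proof
    assume "a = P ! j"
    then have "j = 1" using path_edge_consecutive[of 0 j] a(2) that by (simp add: nth_P_0)
    with a(3) \<open>a = P ! j\<close> show False by simp
  qed
  define f where "f i = (if i < k then P ! (k - 1 - i) else a)" for i
  have "walk_reflection H E ((\<lambda>i. P ! i) ` {m<..k}) ((\<lambda>i. P ! i) ` {m}) (\<lambda>p. f (pos p))"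
  proof (rule path_walk_reflection)
    show "{m<..k} \<union> {m} \<subseteq> {..k}" using k by auto
    show "q \<in> (\<lambda>i. P ! i) ` ({m<..k} \<union> {m})" if "i \<in> {m<..k}" "{P ! i, q} \<in> E" "q \<in> H" for i q
      using upper_segment_closed[of m i q] that by simp
    show "{f i, f (Suc i)} \<in> E" if "i \<in> {m<..k} \<union> {m}" "Suc i \<in> {m<..k} \<union> {m}" for i
    proof (cases "Suc i < k")
      case True
      then have "Suc (k - 1 - Suc i) = k - 1 - i" "k - 1 - Suc i < k" by auto
      then show ?thesis using P_edge[of "k - 1 - Suc i"] True by (simp add: f_def insert_commute)
    next
      case False
      then have "Suc i = k" using that by auto
      then show ?thesis using a(2) by (simp add: f_def nth_P_0)
    qed
    show "f j = P ! j" if "j \<in> {m}" for j using that k by (simp add: f_def)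
    show "inj_on f {m<..k}"
    proof (rule inj_onI)
      fix i j assume "i \<in> {m<..k}" "j \<in> {m<..k}" "f i = f j"
      then show "i = j"
        using nth_P_eq_iff[of "k - 1 - i" "k - 1 - j"] a_off_P[of "k - 1 - i"] a_off_P[of "k - 1 - j"]
        by (auto simp: f_def split: if_splits)
    qed
    show "f i \<in> H - (\<lambda>i. P ! i) ` {m}" if "i \<in> {m<..k}" for i
    proof (cases "i < k")
      case True
      then show ?thesis
        using that nth_P_in_H[of "k - 1 - i"] nth_P_eq_iff[of "k - 1 - i" m] k by (auto simp: f_def)
    next
      case False
      then show ?thesis using a(1) a_off_P[of m] k by (auto simp: f_def)
    qed
  qed
  then show ?thesis by (simp add: f_def m_def)
qed

text \<open>For odd k the path has no middle vertex. Extended by a further neighbour a of x it has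
  one; the reflection about it sends z to x, and the first step from y to z is handled by the
  pendant shifts.\<close>
lemma walk_shifts_odd:
  assumes "odd k" "a \<in> H" "{x, a} \<in> E" "a \<noteq> P ! 1"
  shows "\<exists>f g. walk_shift H E y x f \<and> closed_walk_shift H E y x g"
proof -
  interpret walk_reflection H E "(\<lambda>i. P ! i) ` {k div 2<..k}" "(\<lambda>i. P ! i) ` {k div 2}"
    "\<lambda>p. if pos p < k then P ! (k - 1 - pos p) else a"
    by (rule odd_path_reflection[OF assms])
  have "k - 1 \<in> {k div 2<..k} \<union> {k div 2}" using assms(1) k_pos by auto
  then have "z \<in> (\<lambda>i. P ! i) ` {k div 2<..k} \<union> (\<lambda>i. P ! i) ` {k div 2}" unfolding z_def by blast
  moreover have "(if pos z < k then P ! (k - 1 - pos z) else a) = x"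
    using pos_nth[of "k - 1"] k_pos by (simp add: z_def nth_P_0)
  ultimately have "walk_shift H E z x reflect_head" "closed_walk_shift H E z x reflect_ends"
    using walk_shift_reflect_head[of z] closed_walk_shift_reflect_ends[of z] by simp_all
  moreover have "x \<in> H" using nth_P_in_H[of 0] by (simp add: nth_P_0)
  moreover have "y \<noteq> z" using edge[OF yz_edge] by simp
  ultimately show ?thesis
    using pendant_walk_shift[OF _ _ y_neighbour_in_H H_neighbour_exists]
      pendant_closed_walk_shift[OF _ _ _ y_neighbour_in_H assms(2,3)] by blast
qed

lemma walk_shifts: "\<exists>f g. walk_shift H E y x f \<and> closed_walk_shift H E y x g"
proof (cases "even k")
  case False
  show ?thesis
  proof (cases "\<exists>a \<in> H. {x, a} \<in> E \<and> a \<noteq> P ! 1")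
    case True
    with False walk_shifts_odd show ?thesis by blast
  next
    case False
    then show ?thesis using walk_shifts_no_branch by blast
  qed
qed (rule walk_shifts_even)

lemma branch_transplant_kc:
  assumes "walk_shift H E y x f" "closed_walk_shift H E y x g"
  shows "branch_transplant V H E (kc_transform E x y z) y x f g"
proof
  fix p q
  show "{p, q} \<in> kc_transform E x y z" if "p \<in> H" "q \<in> H" "{p, q} \<in> E"
    using that branch_disjoint_H by (auto simp: kc_transform_def doubleton_eq_iff)
  show "{p, q} \<in> kc_transform E x y z" if "p \<notin> H" "q \<notin> H" "{p, q} \<in> E"
    using that y_in_H by (auto simp: kc_transform_def doubleton_eq_iff)
  show "p = y \<and> {x, q} \<in> kc_transform E x y z" if "p \<in> H" "q \<notin> H" "{p, q} \<in> E"
    using that cross_edge[of q p] by (auto simp: kc_transform_def insert_commute)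
qed (use H_subset_V assms in auto)

lemma num_walks_kc_transform: "num_walks V E l \<le> num_walks V (kc_transform E x y z) l"
proof -
  obtain f g where "walk_shift H E y x f" "closed_walk_shift H E y x g"
    using walk_shifts by blast
  then interpret branch_transplant V H E "kc_transform E x y z" y x f g
    by (rule branch_transplant_kc)
  have "finite V" using tree by (simp add: tree_def simple_graph_def)
  then show ?thesis unfolding num_walks_def by (rule card_walks_le)
qed

end

text \<open>The bound holds for l = 0 as well.\<close>

theorem theorem2:
  fixes V :: "'a set" and E :: "'a set set" and x y :: 'a and P :: "'a list" and l :: nat
  assumes "tree V E"
    and "x \<in> V" and "y \<in> V" and "x \<noteq> y"
    and "is_path V E P" and "hd P = x" and "last P = y"
    and "\<forall>v \<in> set P - {x, y}. degree E v = 2"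
    and "l \<ge> 1"
  shows "num_walks V E l \<le> num_walks V (kc_transform E x y (P ! (length P - 2))) l"
proof -
  interpret kc_setting V E x y P
    using assms by unfold_locales
  have "P ! (length P - 2) = z" using length_P by (simp add: z_def numeral_2_eq_2)
  then show ?thesis using num_walks_kc_transform by simp
qed

end
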